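(* Let $S$ be a semigroup, $I,J$ nonempty index sets, and $P=(p_{ji})_{j\in J,i\in I}$ a $J\times I$ matrix with entries in $S$. If the Rees matrix semigroup $\mathcal{M}[S;I,J;P]$ is DSC, then $|I|=|J|=1$ and $S$ is DSC.
   Context: The Rees matrix semigroup $\mathcal{M}[S;I,J;P]$ is the set $I\times S\times J$ with multiplication $(i,g,j)(k,h,l)=(i,g\,p_{jk}\,h,l)$. For a semigroup $T$, a diagonal subsemigroup of $T\times T$ is a subsemigroup containing $\{(t,t)\colon t\in T\}$; a congruence on $T$ is a diagonal subsemigroup that is symmetric and transitive; $T$ is DSC if every diagonal subsemigroup of $T\times T$ is a congruence on $T$. *)

theory Defs
  imports Main
begin

definition semigroup_on :: "'a set \<Rightarrow> ('a \<Rightarrow> 'a \<Rightarrow> 'a) \<Rightarrow> bool" where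
  "semigroup_on T f \<longleftrightarrow>
     (\<forall>x\<in>T. \<forall>y\<in>T. f x y \<in> T) \<and>
     (\<forall>x\<in>T. \<forall>y\<in>T. \<forall>z\<in>T. f (f x y) z = f x (f y z))"

definition diagonal_subsemigroup ::
    "'a set \<Rightarrow> ('a \<Rightarrow> 'a \<Rightarrow> 'a) \<Rightarrow> ('a \<times> 'a) set \<Rightarrow> bool" where
  "diagonal_subsemigroup T f R \<longleftrightarrow>
     R \<subseteq> T \<times> T \<and>
     (\<forall>(a, b)\<in>R. \<forall>(c, d)\<in>R. (f a c, f b d) \<in> R) \<and>
     (\<forall>t\<in>T. (t, t) \<in> R)"

definition congruence_on ::
    "'a set \<Rightarrow> ('a \<Rightarrow> 'a \<Rightarrow> 'a) \<Rightarrow> ('a \<times> 'a) set \<Rightarrow> bool" where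
  "congruence_on T f R \<longleftrightarrow> diagonal_subsemigroup T f R \<and> sym R \<and> trans R"

definition DSC :: "'a set \<Rightarrow> ('a \<Rightarrow> 'a \<Rightarrow> 'a) \<Rightarrow> bool" where
  "DSC T f \<longleftrightarrow> (\<forall>R. diagonal_subsemigroup T f R \<longrightarrow> congruence_on T f R)"

definition rees_carrier :: "'i set \<Rightarrow> 'a set \<Rightarrow> 'j set \<Rightarrow> ('i \<times> 'a \<times> 'j) set" where
  "rees_carrier I S J = I \<times> S \<times> J"

definition rees_mult ::
    "('a \<Rightarrow> 'a \<Rightarrow> 'a) \<Rightarrow> ('j \<Rightarrow> 'i \<Rightarrow> 'a) \<Rightarrow>
     ('i \<times> 'a \<times> 'j) \<Rightarrow> ('i \<times> 'a \<times> 'j) \<Rightarrow> ('i \<times> 'a \<times> 'j)" where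
  "rees_mult f P x y =
     (case x of (i, g, j) \<Rightarrow> case y of (k, h, l) \<Rightarrow> (i, f (f g (P j k)) h, l))"

end

theory Submission
  imports Defs
begin

text \<open>The DSC property passes to homomorphic images. The projections of
  \<open>\<M>[S;I,J;P]\<close> to \<open>I\<close> and to \<open>J\<close> are homomorphisms onto a left zero and a right zero
  semigroup, in which every reflexive relation is a subsemigroup, so DSC forces both
  to be trivial. Then \<open>g \<mapsto> (i, g, j)\<close> identifies the Rees matrix semigroup with the
  variant \<open>S\<^sup>p\<close> of \<open>S\<close> with multiplication \<open>g h = g p h\<close>, and every diagonal subsemigroup
  of \<open>S\<close> is one of \<open>S\<^sup>p\<close> because it contains \<open>(p, p)\<close>.\<close>

lemma DSC_hom_image:
  assumes closed: "\<forall>x\<in>T. \<forall>y\<in>T. m x y \<in> T"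
    and hom: "\<forall>x\<in>T. \<forall>y\<in>T. \<phi> (m x y) = h (\<phi> x) (\<phi> y)"
    and "DSC T m"
  shows "DSC (\<phi> ` T) h"
  unfolding DSC_def
proof (intro allI impI)
  fix Q assume Q: "diagonal_subsemigroup (\<phi> ` T) h Q"
  define R where "R = {(a, b). a \<in> T \<and> b \<in> T \<and> (\<phi> a, \<phi> b) \<in> Q}"
  have "diagonal_subsemigroup T m R"
    using Q closed hom unfolding diagonal_subsemigroup_def R_def by auto
  then have R: "sym R" "trans R"
    using \<open>DSC T m\<close> unfolding DSC_def congruence_on_def by auto
  have Q_sub: "Q \<subseteq> \<phi> ` T \<times> \<phi> ` T" and Q_refl: "\<And>a. a \<in> T \<Longrightarrow> (\<phi> a, \<phi> a) \<in> Q"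
    using Q unfolding diagonal_subsemigroup_def by auto
  have "sym Q"
  proof (rule symI)
    fix u v assume "(u, v) \<in> Q"
    moreover from this obtain a b where "a \<in> T" "b \<in> T" "u = \<phi> a" "v = \<phi> b"
      using Q_sub by blast
    ultimately show "(v, u) \<in> Q"
      using R(1) by (auto simp: R_def dest: symD)
  qed
  moreover have "trans Q"
  proof (rule transI)
    fix u v w assume uv: "(u, v) \<in> Q" and vw: "(v, w) \<in> Q"
    obtain a b where "a \<in> T" "b \<in> T" "u = \<phi> a" "v = \<phi> b"
      using uv Q_sub by blast
    moreover obtain b' c where "b' \<in> T" "c \<in> T" "v = \<phi> b'" "w = \<phi> c"
      using vw Q_sub by blast
    moreover note Q_refl[of b] \<comment> \<open>\<open>b\<close> and \<open>b'\<close> are \<open>R\<close>-related because \<open>\<phi> b = \<phi> b'\<close>\<close>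
    ultimately show "(u, w) \<in> Q"
      using uv vw R(2) by (auto simp: R_def dest: transD)
  qed
  ultimately show "congruence_on (\<phi> ` T) h Q"
    using Q by (simp add: congruence_on_def)
qed

text \<open>The hypothesis on \<open>h\<close> covers left and right zero semigroups, where every reflexive
  relation is a subsemigroup.\<close>

lemma DSC_projection_subsingleton:
  assumes proj: "\<forall>a b c d. (h a c, h b d) = (a, b) \<or> (h a c, h b d) = (c, d)"
    and "DSC X h"
  shows "\<exists>x. X \<subseteq> {x}"
proof -
  have "x = y" if "x \<in> X" "y \<in> X" for x y
  proof -
    define R where "R = Id_on X \<union> {(x, y)}"
    have "(h a c, h b d) \<in> R" if "(a, b) \<in> R" "(c, d) \<in> R" for a b c d
      using proj that by metis
    moreover have "R \<subseteq> X \<times> X" "\<forall>t\<in>X. (t, t) \<in> R"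
      using that by (auto simp: R_def)
    ultimately have "diagonal_subsemigroup X h R"
      unfolding diagonal_subsemigroup_def by blast
    then have "sym R"
      using \<open>DSC X h\<close> unfolding DSC_def congruence_on_def by auto
    moreover have "(x, y) \<in> R" by (simp add: R_def)
    ultimately have "(y, x) \<in> R" by (rule symD)
    then show "x = y" by (auto simp: R_def)
  qed
  then show ?thesis by blast
qed

lemma DSC_of_DSC_variant:
  assumes "p \<in> S" and "DSC S (\<lambda>x y. f (f x p) y)"
  shows "DSC S f"
  unfolding DSC_def
proof (intro allI impI)
  fix R assume R: "diagonal_subsemigroup S f R"
  have mult: "(f a c, f b d) \<in> R" if "(a, b) \<in> R" "(c, d) \<in> R" for a b c d
    using R that unfolding diagonal_subsemigroup_def by fastforce
  have "(p, p) \<in> R"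
    using R \<open>p \<in> S\<close> unfolding diagonal_subsemigroup_def by blast
  have "(f (f a p) c, f (f b p) d) \<in> R" if "(a, b) \<in> R" "(c, d) \<in> R" for a b c d
    by (rule mult[OF mult[OF that(1) \<open>(p, p) \<in> R\<close>] that(2)])
  with R have "diagonal_subsemigroup S (\<lambda>x y. f (f x p) y) R"
    unfolding diagonal_subsemigroup_def by auto
  then show "congruence_on S f R"
    using R \<open>DSC S (\<lambda>x y. f (f x p) y)\<close> by (simp add: DSC_def congruence_on_def)
qed

lemma rees_mult_simp [simp]:
  "rees_mult f P (i, g, j) (k, h, l) = (i, f (f g (P j k)) h, l)"
  by (simp add: rees_mult_def)

lemma rees_carrier_closed:
  assumes "semigroup_on S f" and "\<forall>j\<in>J. \<forall>i\<in>I. P j i \<in> S"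
  shows "\<forall>x\<in>rees_carrier I S J. \<forall>y\<in>rees_carrier I S J. rees_mult f P x y \<in> rees_carrier I S J"
  using assms by (auto simp: rees_carrier_def semigroup_on_def)

theorem mainTheorem4:
  fixes S :: "'a set" and f :: "'a \<Rightarrow> 'a \<Rightarrow> 'a"
    and I :: "'i set" and J :: "'j set" and P :: "'j \<Rightarrow> 'i \<Rightarrow> 'a"
  assumes "semigroup_on S f"
    and "I \<noteq> {}" and "J \<noteq> {}"
    and "\<forall>j\<in>J. \<forall>i\<in>I. P j i \<in> S"
    and "DSC (rees_carrier I S J) (rees_mult f P)"
  shows "card I = 1 \<and> card J = 1 \<and> DSC S f"
proof -
  let ?T = "rees_carrier I S J"
  note DSC_image = DSC_hom_image[OF rees_carrier_closed[OF assms(1,4)] _ assms(5)]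
  have "S \<noteq> {}" using assms(2-4) by blast
  have "fst ` ?T = I"
    using \<open>S \<noteq> {}\<close> assms(3) by (auto simp: rees_carrier_def)
  moreover have "DSC (fst ` ?T) (\<lambda>u v. u)"
    by (rule DSC_image) (auto simp: rees_carrier_def)
  ultimately obtain i where i: "I = {i}"
    using DSC_projection_subsingleton[of "\<lambda>u v. u" I] assms(2) by (auto dest!: subset_singletonD)
  have "(\<lambda>x. snd (snd x)) ` ?T = J"
    using \<open>S \<noteq> {}\<close> assms(2) by (force simp: rees_carrier_def)
  moreover have "DSC ((\<lambda>x. snd (snd x)) ` ?T) (\<lambda>u v. v)"
    by (rule DSC_image) (auto simp: rees_carrier_def)
  ultimately obtain j where j: "J = {j}"
    using DSC_projection_subsingleton[of "\<lambda>u v. v" J] assms(3) by (auto dest!: subset_singletonD)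
  have "(\<lambda>x. fst (snd x)) ` ?T = S"
    by (force simp: rees_carrier_def i j)
  moreover have "DSC ((\<lambda>x. fst (snd x)) ` ?T) (\<lambda>g h. f (f g (P j i)) h)"
    by (rule DSC_image) (auto simp: rees_carrier_def i j)
  ultimately have "DSC S (\<lambda>g h. f (f g (P j i)) h)" by (simp only:)
  moreover have "P j i \<in> S" using assms(4) i j by blast
  ultimately have "DSC S f" by (rule DSC_of_DSC_variant[rotated])
  then show ?thesis by (simp add: i j)
qed

end
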